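(* Let $X$ be a nontrivial real Banach space with dual $X^*$. The following assertions are equivalent: (i) $X$ is weakly octahedral; (ii) whenever $E$ is a finite-dimensional subspace of $X$, $x^*\in B_{X^*}$, and $\varepsilon>0$, there is a $y\in S_X$ such that $\|x+ty\|\geq(1-\varepsilon)(|x^*(x)|+t)$ for all $x\in S_E$ and $t>0$; (ii') whenever $n\in\mathbb{N}$, $x_1,\dots,x_n\in S_X$, $x^*\in B_{X^*}$, and $\varepsilon>0$, there is a $y\in S_X$ such that $\|x_i+ty\|\geq(1-\varepsilon)(|x^*(x_i)|+t)$ for all $i\in\{1,\dots,n\}$ and $t>0$; (iii) whenever $n\in\mathbb{N}$, $x_1,\dots,x_n\in S_X$, $x^*\in B_{X^*}$, and $\varepsilon>0$, there is a $y\in S_X$ such that $\|x_i+ty\|\geq(1-\varepsilon)(|x^*(x_i)|+t)$ for all $i\in\{1,\dots,n\}$ and $t\geq\varepsilon$.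
   Context: $B_X$, $S_X$ denote the closed unit ball and unit sphere of $X$; similarly for $X^*$. The norm on $X$ (or $X$ itself) is called weakly octahedral if for every finite-dimensional subspace $E$ of $X$, every $x^*\in B_{X^*}$, and every $\varepsilon>0$, there is a $y\in S_X$ such that $\|x+y\|\geq(1-\varepsilon)(|x^*(x)|+\|y\|)$ for all $x\in E$. *)

theory Defs
  imports "HOL-Analysis.Analysis"
begin

definition fin_dim_subspace :: "'a::real_normed_vector set \<Rightarrow> bool" where
  "fin_dim_subspace E \<longleftrightarrow> subspace E \<and> (\<exists>B. finite B \<and> span B = E)"

definition weakly_octahedral :: "'a::real_normed_vector itself \<Rightarrow> bool" where
  "weakly_octahedral TYPE('a) \<longleftrightarrow>
     (\<forall>E::'a set. \<forall>xs::'a \<Rightarrow>\<^sub>L real. \<forall>\<epsilon>::real.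
        fin_dim_subspace E \<and> norm xs \<le> 1 \<and> \<epsilon> > 0 \<longrightarrow>
        (\<exists>y. norm y = 1 \<and>
             (\<forall>x\<in>E. norm (x + y) \<ge> (1 - \<epsilon>) * (\<bar>blinfun_apply xs x\<bar> + norm y))))"

end

theory Submission
  imports Defs
begin

text \<open>Condition (i) differs from (ii) only by homogeneity: both sides of
  \<open>norm (x + t y) \<ge> (1 - \<epsilon>) (\<bar>x\<^sup>*(x)\<bar> + t)\<close> scale linearly in \<open>(x, t)\<close>.
  The trivial implications (ii) \<open>\<Rightarrow>\<close> (ii') \<open>\<Rightarrow>\<close> (iii) close the cycle once (iii)
  gives back (ii). For that, the unit sphere of a finite-dimensional subspace
  \<open>E\<close> is compact, so it has a finite \<open>\<epsilon>\<^sup>2/8\<close>-net; applying (iii) to the net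
  with \<open>\<epsilon>/2\<close> controls all \<open>t \<ge> \<epsilon>/2\<close> at every point of the sphere up to an
  error \<open>2 \<cdot> \<epsilon>\<^sup>2/8\<close> that the slack \<open>(\<epsilon>/2)(\<bar>x\<^sup>*(x)\<bar> + t)\<close> absorbs, while for
  \<open>t < \<epsilon>/2\<close> the estimate \<open>norm (x + t y) \<ge> 1 - t\<close> already suffices.\<close>

lemma closed_if_compact_Int_cball:
  fixes S :: "'a::real_normed_vector set"
  assumes "\<And>R. compact (S \<inter> cball 0 R)"
  shows "closed S"
proof (rule closed_sequential_limits[THEN iffD2], intro allI impI, elim conjE)
  fix x l assume x: "\<forall>n. x n \<in> S" and lim: "x \<longlonglongrightarrow> l"
  have "eventually (\<lambda>n. dist (x n) l < 1) sequentially"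
    using lim by (rule tendstoD) simp
  then have "eventually (\<lambda>n. x n \<in> S \<inter> cball 0 (norm l + 1)) sequentially"
  proof eventually_elim
    case (elim n)
    then show ?case
      using x norm_triangle_sub[of "x n" l] by (simp add: dist_norm)
  qed
  then have "l \<in> S \<inter> cball 0 (norm l + 1)"
    by (rule Lim_in_closed_set[OF compact_imp_closed[OF assms] _ trivial_limit_sequentially lim])
  then show "l \<in> S"
    by simp
qed

lemma abs_mult_infdist_span_le:
  fixes a w :: "'a::real_normed_vector"
  assumes "w - s *\<^sub>R a \<in> span B"
  shows "\<bar>s\<bar> * infdist a (span B) \<le> norm w"
proof (cases "s = 0")
  case False
  have "(s *\<^sub>R a - w) /\<^sub>R s \<in> span B"
    using span_scale[OF span_neg[OF assms], of "inverse s"] by (simp add: algebra_simps)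
  then have "infdist a (span B) \<le> dist a ((s *\<^sub>R a - w) /\<^sub>R s)"
    by (rule infdist_le)
  also have "\<dots> = norm w / \<bar>s\<bar>"
    using False by (simp add: dist_norm algebra_simps divide_inverse_commute)
  finally show ?thesis
    using False by (simp add: field_simps)
qed simp

text \<open>Adjoining to \<open>B\<close> a vector \<open>a\<close> at distance \<open>d > 0\<close> from \<open>span B\<close> bounds the
  \<open>a\<close>-coordinate of the points of norm at most \<open>R\<close> by \<open>R / d\<close>.\<close>

lemma compact_span_Int_cball:
  fixes B :: "'a::real_normed_vector set"
  assumes "finite B"
  shows "compact (span B \<inter> cball 0 R)"
  using assms
proof (induction B arbitrary: R rule: finite_induct)
  case empty
  show ?case
    by (simp add: finite_imp_compact)
next
  case (insert a B)
  show ?case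
  proof (cases "a \<in> span B")
    case True
    then show ?thesis
      using insert.IH by (simp add: span_redundant)
  next
    case False
    define d where "d = infdist a (span B)"
    have "d > 0"
      unfolding d_def using False span_zero closed_if_compact_Int_cball[OF insert.IH]
      by (intro infdist_pos_not_in_closed) auto
    define c where "c = \<bar>R\<bar> / d"
    define S where "S = (\<lambda>(x, s). x + s *\<^sub>R a) ` ((span B \<inter> cball 0 (\<bar>R\<bar> + c * norm a)) \<times> {-c..c})"
    have "compact S"
      unfolding S_def case_prod_unfold
      by (intro compact_continuous_image compact_Times insert.IH compact_Icc continuous_intros)
    moreover have "span (insert a B) \<inter> cball 0 R = S \<inter> cball 0 R"
    proof
      show "S \<inter> cball 0 R \<subseteq> span (insert a B) \<inter> cball 0 R"
        unfolding S_def by (auto simp: span_insert) (metis add_diff_cancel)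
    next
      show "span (insert a B) \<inter> cball 0 R \<subseteq> S \<inter> cball 0 R"
      proof
        fix x assume x: "x \<in> span (insert a B) \<inter> cball 0 R"
        then obtain s where s: "x - s *\<^sub>R a \<in> span B"
          by (auto simp: span_insert)
        have "\<bar>s\<bar> * d \<le> \<bar>R\<bar>"
          using abs_mult_infdist_span_le[OF s] x unfolding d_def by auto
        then have "\<bar>s\<bar> \<le> c"
          using \<open>d > 0\<close> by (simp add: c_def field_simps)
        have "norm (x - s *\<^sub>R a) \<le> \<bar>R\<bar> + c * norm a"
          using norm_triangle_ineq4[of x "s *\<^sub>R a"] x \<open>\<bar>s\<bar> \<le> c\<close> mult_right_mono[OF \<open>\<bar>s\<bar> \<le> c\<close>, of "norm a"]
          by auto
        then show "x \<in> S \<inter> cball 0 R"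
          using s x \<open>\<bar>s\<bar> \<le> c\<close> unfolding S_def
          by (auto intro!: image_eqI[of _ _ "(x - s *\<^sub>R a, s)"] simp: abs_le_iff)
      qed
    qed
    ultimately show ?thesis
      by (simp add: compact_Int_closed)
  qed
qed

text \<open>The inequality defining weak octahedrality, written for the pair \<open>(x, v) = (x, t y)\<close>
  so that it is positively homogeneous in \<open>(x, v)\<close>.\<close>

definition almost_l1_sum :: "('a::real_normed_vector \<Rightarrow>\<^sub>L real) \<Rightarrow> real \<Rightarrow> 'a \<Rightarrow> 'a \<Rightarrow> bool" where
  "almost_l1_sum f \<epsilon> x v \<longleftrightarrow> (1 - \<epsilon>) * (\<bar>blinfun_apply f x\<bar> + norm v) \<le> norm (x + v)"

lemma almost_l1_sum_scaleR_unit: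
  "norm y = 1 \<Longrightarrow> 0 \<le> t \<Longrightarrow>
    almost_l1_sum f \<epsilon> x (t *\<^sub>R y) \<longleftrightarrow> (1 - \<epsilon>) * (\<bar>blinfun_apply f x\<bar> + t) \<le> norm (x + t *\<^sub>R y)"
  by (simp add: almost_l1_sum_def)

lemma almost_l1_sum_scaleR:
  assumes "c > 0"
  shows "almost_l1_sum f \<epsilon> (c *\<^sub>R x) (c *\<^sub>R v) \<longleftrightarrow> almost_l1_sum f \<epsilon> x v"
proof -
  have lhs: "(1 - \<epsilon>) * (\<bar>blinfun_apply f (c *\<^sub>R x)\<bar> + norm (c *\<^sub>R v)) =
        c * ((1 - \<epsilon>) * (\<bar>blinfun_apply f x\<bar> + norm v))"
    using assms by (simp add: blinfun.scaleR_right abs_mult algebra_simps)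
  have rhs: "norm (c *\<^sub>R x + c *\<^sub>R v) = c * norm (x + v)"
    using assms by (simp flip: scaleR_add_right)
  show ?thesis
    unfolding almost_l1_sum_def lhs rhs using assms by (rule mult_le_cancel_left_pos)
qed

lemma almost_l1_sum_mono: "\<epsilon> \<le> \<epsilon>' \<Longrightarrow> almost_l1_sum f \<epsilon> x v \<Longrightarrow> almost_l1_sum f \<epsilon>' x v"
  unfolding almost_l1_sum_def
  by (smt (verit) abs_ge_zero mult_right_mono norm_ge_zero)

lemma almost_l1_sum_zero_left: "0 \<le> \<epsilon> \<Longrightarrow> almost_l1_sum f \<epsilon> 0 v"
  by (simp add: almost_l1_sum_def algebra_simps)

lemma abs_blinfun_apply_le: "norm f \<le> 1 \<Longrightarrow> \<bar>blinfun_apply f x\<bar> \<le> norm x"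
  using norm_blinfun[of f x] mult_right_mono[of "norm f" 1 "norm x"] by simp

lemma almost_l1_sum_if_small:
  assumes "norm f \<le> 1" "norm u = 1" "0 \<le> \<epsilon>" "2 * norm v \<le> \<epsilon>"
  shows "almost_l1_sum f \<epsilon> u v"
proof (cases "\<epsilon> \<le> 1")
  case True
  have "(1 - \<epsilon>) * (\<bar>blinfun_apply f u\<bar> + norm v) \<le> (1 - \<epsilon>) * (1 + norm v)"
    using abs_blinfun_apply_le[OF assms(1), of u] assms(2) True by (intro mult_left_mono) auto
  also have "\<dots> = 1 - norm v - (\<epsilon> - 2 * norm v) - \<epsilon> * norm v"
    by (simp add: algebra_simps)
  also have "\<dots> \<le> 1 - norm v"
    using assms(3,4) mult_nonneg_nonneg[OF assms(3) norm_ge_zero[of v]] by linarith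
  also have "\<dots> \<le> norm (u + v)"
    using norm_diff_ineq[of u v] assms(2) by simp
  finally show ?thesis
    unfolding almost_l1_sum_def .
next
  case False
  then have "(1 - \<epsilon>) * (\<bar>blinfun_apply f u\<bar> + norm v) \<le> 0"
    by (intro mult_nonpos_nonneg) auto
  then show ?thesis
    unfolding almost_l1_sum_def using norm_ge_zero order_trans by blast
qed

lemma almost_l1_sum_perturb:
  assumes "norm f \<le> 1" "0 \<le> \<epsilon>" "\<epsilon> \<le> 1" "almost_l1_sum f \<epsilon> v w" "norm (u - v) \<le> \<delta>"
  shows "(1 - \<epsilon>) * (\<bar>blinfun_apply f u\<bar> + norm w) - 2 * \<delta> \<le> norm (u + w)"
proof -
  have "\<bar>blinfun_apply f u\<bar> - \<delta> \<le> \<bar>blinfun_apply f v\<bar>"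
    using abs_blinfun_apply_le[OF assms(1), of "u - v"] assms(5) by (simp add: blinfun.diff_right)
  then have "(1 - \<epsilon>) * (\<bar>blinfun_apply f u\<bar> + norm w) - (1 - \<epsilon>) * \<delta> \<le> (1 - \<epsilon>) * (\<bar>blinfun_apply f v\<bar> + norm w)"
    using assms(3) mult_left_mono[of "\<bar>blinfun_apply f u\<bar> - \<delta>" "\<bar>blinfun_apply f v\<bar>" "1 - \<epsilon>"]
    by (simp add: algebra_simps)
  also have "\<dots> \<le> norm (v + w)"
    using assms(4) unfolding almost_l1_sum_def .
  also have "\<dots> \<le> norm (u + w) + \<delta>"
    using norm_triangle_ineq[of "u + w" "v - u"] assms(5) by (simp add: norm_minus_commute add.commute)
  moreover have "(1 - \<epsilon>) * \<delta> \<le> \<delta>"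
    using assms(2,3) order_trans[OF norm_ge_zero assms(5)] by (intro mult_left_le_one_le) auto
  ultimately show ?thesis
    by linarith
qed

lemma weakly_octahedral_sphere:
  assumes "weakly_octahedral TYPE('a::real_normed_vector)"
    and "fin_dim_subspace E" "norm f \<le> 1" "0 < \<epsilon>"
  shows "\<exists>y::'a. norm y = 1 \<and> (\<forall>u\<in>E. \<forall>t. norm u = 1 \<and> 0 < t \<longrightarrow> almost_l1_sum f \<epsilon> u (t *\<^sub>R y))"
proof -
  obtain y :: 'a where "norm y = 1"
    and "\<And>x. x \<in> E \<Longrightarrow> (1 - \<epsilon>) * (\<bar>blinfun_apply f x\<bar> + norm y) \<le> norm (x + y)"
    using assms unfolding weakly_octahedral_def by blast
  then have y: "\<And>x. x \<in> E \<Longrightarrow> almost_l1_sum f \<epsilon> x y"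
    unfolding almost_l1_sum_def by blast
  have "almost_l1_sum f \<epsilon> u (t *\<^sub>R y)" if "u \<in> E" "0 < t" for u t
  proof -
    have "u /\<^sub>R t \<in> E"
      using assms(2) that(1) unfolding fin_dim_subspace_def by (simp add: subspace_scale)
    then show ?thesis
      using y almost_l1_sum_scaleR[OF that(2), of f \<epsilon> "u /\<^sub>R t" y] that(2) by simp
  qed
  then show ?thesis
    using \<open>norm y = 1\<close> by blast
qed

lemma weakly_octahedralI_sphere:
  assumes "\<And>E f \<epsilon>. fin_dim_subspace (E::'a::real_normed_vector set) \<Longrightarrow> norm f \<le> 1 \<Longrightarrow> 0 < \<epsilon> \<Longrightarrow> \<epsilon> \<le> 1 \<Longrightarrow>
      \<exists>y. norm y = 1 \<and> (\<forall>u\<in>E. \<forall>t. norm u = 1 \<and> 0 < t \<longrightarrow> almost_l1_sum f \<epsilon> u (t *\<^sub>R y))"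
  shows "weakly_octahedral TYPE('a)"
  unfolding weakly_octahedral_def
proof (intro allI impI, elim conjE)
  fix E :: "'a set" and f :: "'a \<Rightarrow>\<^sub>L real" and \<epsilon> :: real
  assume "fin_dim_subspace E" "norm f \<le> 1" "0 < \<epsilon>"
  then obtain y where "norm y = 1"
    and y: "\<And>u t. u \<in> E \<Longrightarrow> norm u = 1 \<Longrightarrow> 0 < t \<Longrightarrow> almost_l1_sum f (min \<epsilon> 1) u (t *\<^sub>R y)"
    using assms[of E f "min \<epsilon> 1"] by auto
  have "almost_l1_sum f \<epsilon> x y" if "x \<in> E" for x
  proof (cases "x = 0")
    case True
    then show ?thesis
      using \<open>0 < \<epsilon>\<close> by (simp add: almost_l1_sum_zero_left)
  next
    case False
    have "x /\<^sub>R norm x \<in> E"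
      using \<open>fin_dim_subspace E\<close> that unfolding fin_dim_subspace_def by (simp add: subspace_scale)
    then have "almost_l1_sum f (min \<epsilon> 1) (x /\<^sub>R norm x) ((1 / norm x) *\<^sub>R y)"
      using y False by simp
    then have "almost_l1_sum f (min \<epsilon> 1) x y"
      using almost_l1_sum_scaleR[of "norm x" f "min \<epsilon> 1" "x /\<^sub>R norm x" "(1 / norm x) *\<^sub>R y"] False
      by simp
    then show ?thesis
      by (rule almost_l1_sum_mono[rotated]) simp
  qed
  then show "\<exists>y. norm y = 1 \<and> (\<forall>x\<in>E. (1 - \<epsilon>) * (\<bar>blinfun_apply f x\<bar> + norm y) \<le> norm (x + y))"
    using \<open>norm y = 1\<close> unfolding almost_l1_sum_def by blast
qed

lemma almost_l1_sum_finite_sets_if_indexed: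
  assumes "\<exists>z::'a::real_normed_vector. z \<noteq> 0"
    and indexed: "\<forall>n::nat. \<forall>x::nat \<Rightarrow> 'a. \<forall>f::'a \<Rightarrow>\<^sub>L real. \<forall>\<epsilon>::real.
         n \<ge> 1 \<and> (\<forall>i\<in>{1..n}. norm (x i) = 1) \<and> norm f \<le> 1 \<and> \<epsilon> > 0 \<longrightarrow>
         (\<exists>y::'a. norm y = 1 \<and>
            (\<forall>i\<in>{1..n}. \<forall>t::real. t \<ge> \<epsilon> \<longrightarrow>
               norm (x i + t *\<^sub>R y) \<ge> (1 - \<epsilon>) * (\<bar>blinfun_apply f (x i)\<bar> + t)))"
    and "finite N" "N \<subseteq> sphere 0 1" "norm f \<le> 1" "0 < \<epsilon>"
  shows "\<exists>y::'a. norm y = 1 \<and> (\<forall>x\<in>N. \<forall>t\<ge>\<epsilon>. almost_l1_sum f \<epsilon> x (t *\<^sub>R y))"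
proof (cases "N = {}")
  case True
  obtain z :: 'a where "z \<noteq> 0"
    using assms(1) by blast
  then have "norm (z /\<^sub>R norm z) = 1"
    by simp
  then show ?thesis
    using True by blast
next
  case False
  obtain x where x: "bij_betw x {1..card N} N"
    using ex_bij_betw_nat_finite_1[OF \<open>finite N\<close>] by blast
  have "card N \<ge> 1"
    using False \<open>finite N\<close> by (simp add: Suc_le_eq card_gt_0_iff)
  moreover have "\<forall>i\<in>{1..card N}. norm (x i) = 1"
    using bij_betwE[OF x] \<open>N \<subseteq> sphere 0 1\<close> by auto
  ultimately have "card N \<ge> 1 \<and> (\<forall>i\<in>{1..card N}. norm (x i) = 1) \<and> norm f \<le> 1 \<and> \<epsilon> > 0"
    using \<open>norm f \<le> 1\<close> \<open>0 < \<epsilon>\<close> by blast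
  from indexed[rule_format, OF this] obtain y :: 'a where "norm y = 1"
    and y: "\<forall>i\<in>{1..card N}. \<forall>t. t \<ge> \<epsilon> \<longrightarrow>
      norm (x i + t *\<^sub>R y) \<ge> (1 - \<epsilon>) * (\<bar>blinfun_apply f (x i)\<bar> + t)"
    by blast
  have "almost_l1_sum f \<epsilon> u (t *\<^sub>R y)" if "u \<in> N" "t \<ge> \<epsilon>" for u t
  proof -
    have "u \<in> x ` {1..card N}"
      using bij_betw_imp_surj_on[OF x] that(1) by simp
    then obtain i where "i \<in> {1..card N}" "u = x i"
      by blast
    moreover have "0 \<le> t"
      using that(2) \<open>0 < \<epsilon>\<close> by simp
    ultimately show ?thesis
      using y[rule_format, OF \<open>i \<in> {1..card N}\<close> that(2)] \<open>norm y = 1\<close>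
      by (simp add: almost_l1_sum_scaleR_unit)
  qed
  then show ?thesis
    using \<open>norm y = 1\<close> by blast
qed

lemma weakly_octahedral_iff_sphere:
  "weakly_octahedral TYPE('a::real_normed_vector) \<longleftrightarrow>
      (\<forall>E::'a set. \<forall>xs::'a \<Rightarrow>\<^sub>L real. \<forall>\<epsilon>::real.
         fin_dim_subspace E \<and> norm xs \<le> 1 \<and> \<epsilon> > 0 \<longrightarrow>
         (\<exists>y::'a. norm y = 1 \<and>
            (\<forall>x\<in>E. \<forall>t::real. norm x = 1 \<and> t > 0 \<longrightarrow>
               norm (x + t *\<^sub>R y) \<ge> (1 - \<epsilon>) * (\<bar>blinfun_apply xs x\<bar> + t))))"
  (is "_ \<longleftrightarrow> (\<forall>E f \<epsilon>. ?hyps E f \<epsilon> \<longrightarrow> (\<exists>y. ?concl E f \<epsilon> y))")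
proof -
  have "almost_l1_sum f \<epsilon> x (t *\<^sub>R y) \<longleftrightarrow> (1 - \<epsilon>) * (\<bar>blinfun_apply f x\<bar> + t) \<le> norm (x + t *\<^sub>R y)"
    if "norm y = 1" "0 < t" for f \<epsilon> x t and y :: 'a
    using that by (simp add: almost_l1_sum_scaleR_unit)
  then have concl_eq: "?concl E f \<epsilon> y \<longleftrightarrow>
      norm y = 1 \<and> (\<forall>u\<in>E. \<forall>t. norm u = 1 \<and> 0 < t \<longrightarrow> almost_l1_sum f \<epsilon> u (t *\<^sub>R y))" for E f \<epsilon> y
    by auto
  show ?thesis
    unfolding concl_eq
  proof
    assume "weakly_octahedral TYPE('a)"
    then show "\<forall>E f \<epsilon>. ?hyps E f \<epsilon> \<longrightarrow> (\<exists>y. norm y = 1 \<and>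
        (\<forall>u\<in>E. \<forall>t. norm u = 1 \<and> 0 < t \<longrightarrow> almost_l1_sum f \<epsilon> u (t *\<^sub>R y)))"
      using weakly_octahedral_sphere by blast
  qed (intro weakly_octahedralI_sphere, blast)
qed

lemma almost_l1_sum_sphere_if_finite_sets:
  fixes E :: "'a::real_normed_vector set"
  assumes finite_sets: "\<And>N::'a set. \<And>f \<epsilon>. finite N \<Longrightarrow> N \<subseteq> sphere 0 1 \<Longrightarrow> norm f \<le> 1 \<Longrightarrow> 0 < \<epsilon> \<Longrightarrow>
      \<exists>y. norm y = 1 \<and> (\<forall>x\<in>N. \<forall>t\<ge>\<epsilon>. almost_l1_sum f \<epsilon> x (t *\<^sub>R y))"
    and E: "fin_dim_subspace E" and f: "norm f \<le> 1" and "0 < \<epsilon>" "\<epsilon> \<le> 1"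
  shows "\<exists>y. norm y = 1 \<and> (\<forall>u\<in>E. \<forall>t. norm u = 1 \<and> 0 < t \<longrightarrow> almost_l1_sum f \<epsilon> u (t *\<^sub>R y))"
proof -
  obtain B where "finite B" "span B = E"
    using E unfolding fin_dim_subspace_def by blast
  define K where "K = E \<inter> sphere 0 1"
  have "K = (span B \<inter> cball 0 1) \<inter> sphere 0 1"
    using \<open>span B = E\<close> by (auto simp: K_def)
  moreover have "closed (sphere (0::'a) 1)"
    unfolding sphere_def by (intro closed_Collect_eq continuous_intros)
  ultimately have "compact K"
    using compact_span_Int_cball[OF \<open>finite B\<close>] by (simp add: compact_Int_closed)
  define \<delta> where "\<delta> = \<epsilon>\<^sup>2 / 8"
  have "\<delta> > 0"
    using \<open>0 < \<epsilon>\<close> by (simp add: \<delta>_def)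
  then have "\<exists>N. finite N \<and> N \<subseteq> K \<and> K \<subseteq> (\<Union>x\<in>N. ball x \<delta>)"
    by (rule seq_compact_imp_totally_bounded[OF compact_imp_seq_compact[OF \<open>compact K\<close>], rule_format])
  then obtain N where "finite N" "N \<subseteq> K" and net: "K \<subseteq> (\<Union>x\<in>N. ball x \<delta>)"
    by metis
  obtain y where "norm y = 1" and y: "\<And>x t. x \<in> N \<Longrightarrow> \<epsilon> / 2 \<le> t \<Longrightarrow> almost_l1_sum f (\<epsilon> / 2) x (t *\<^sub>R y)"
    using finite_sets[of N f "\<epsilon> / 2"] \<open>finite N\<close> \<open>N \<subseteq> K\<close> f \<open>0 < \<epsilon>\<close> by (auto simp: K_def)
  have "almost_l1_sum f \<epsilon> u (t *\<^sub>R y)" if "u \<in> E" "norm u = 1" "0 < t" for u t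
  proof (cases "t \<le> \<epsilon> / 2")
    case True
    then show ?thesis
      using \<open>norm y = 1\<close> that \<open>0 < \<epsilon>\<close> by (intro almost_l1_sum_if_small f) auto
  next
    case False
    have "u \<in> K"
      using that by (simp add: K_def)
    then have "u \<in> (\<Union>x\<in>N. ball x \<delta>)"
      using net by (rule subsetD[rotated])
    then obtain v where "v \<in> N" "u \<in> ball v \<delta>"
      by blast
    then have "norm (u - v) \<le> \<delta>" and "almost_l1_sum f (\<epsilon> / 2) v (t *\<^sub>R y)"
      using y False by (simp_all add: dist_norm norm_minus_commute)
    then have "(1 - \<epsilon> / 2) * (\<bar>blinfun_apply f u\<bar> + norm (t *\<^sub>R y)) - 2 * \<delta> \<le> norm (u + t *\<^sub>R y)"
      using \<open>0 < \<epsilon>\<close> \<open>\<epsilon> \<le> 1\<close> by (intro almost_l1_sum_perturb[OF f]) auto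
    then have "(1 - \<epsilon> / 2) * (\<bar>blinfun_apply f u\<bar> + t) - 2 * \<delta> \<le> norm (u + t *\<^sub>R y)"
      using \<open>norm y = 1\<close> \<open>0 < t\<close> by simp
    moreover have "2 * \<delta> \<le> \<epsilon> / 2 * (\<bar>blinfun_apply f u\<bar> + t)"
      using False \<open>0 < \<epsilon>\<close> mult_left_mono[of "\<epsilon> / 2" "\<bar>blinfun_apply f u\<bar> + t" "\<epsilon> / 2"]
      by (simp add: \<delta>_def power2_eq_square)
    moreover have "(1 - \<epsilon>) * (\<bar>blinfun_apply f u\<bar> + t) =
        (1 - \<epsilon> / 2) * (\<bar>blinfun_apply f u\<bar> + t) - \<epsilon> / 2 * (\<bar>blinfun_apply f u\<bar> + t)"
      by (simp add: algebra_simps)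
    ultimately show ?thesis
      using \<open>norm y = 1\<close> \<open>0 < t\<close> by (simp add: almost_l1_sum_scaleR_unit)
  qed
  then show ?thesis
    using \<open>norm y = 1\<close> by blast
qed

theorem proposition2p5:
  assumes nontriv: "\<exists>z::'a::banach. z \<noteq> 0"
  shows
   "(weakly_octahedral TYPE('a) \<longleftrightarrow>
      (\<forall>E::'a set. \<forall>xs::'a \<Rightarrow>\<^sub>L real. \<forall>\<epsilon>::real.
         fin_dim_subspace E \<and> norm xs \<le> 1 \<and> \<epsilon> > 0 \<longrightarrow>
         (\<exists>y::'a. norm y = 1 \<and>
            (\<forall>x\<in>E. \<forall>t::real. norm x = 1 \<and> t > 0 \<longrightarrow>
               norm (x + t *\<^sub>R y) \<ge> (1 - \<epsilon>) * (\<bar>blinfun_apply xs x\<bar> + t)))))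
    \<and> (weakly_octahedral TYPE('a) \<longleftrightarrow>
      (\<forall>n::nat. \<forall>x::nat \<Rightarrow> 'a. \<forall>xs::'a \<Rightarrow>\<^sub>L real. \<forall>\<epsilon>::real.
         n \<ge> 1 \<and> (\<forall>i\<in>{1..n}. norm (x i) = 1) \<and> norm xs \<le> 1 \<and> \<epsilon> > 0 \<longrightarrow>
         (\<exists>y::'a. norm y = 1 \<and>
            (\<forall>i\<in>{1..n}. \<forall>t::real. t > 0 \<longrightarrow>
               norm (x i + t *\<^sub>R y) \<ge> (1 - \<epsilon>) * (\<bar>blinfun_apply xs (x i)\<bar> + t)))))
    \<and> (weakly_octahedral TYPE('a) \<longleftrightarrow>
      (\<forall>n::nat. \<forall>x::nat \<Rightarrow> 'a. \<forall>xs::'a \<Rightarrow>\<^sub>L real. \<forall>\<epsilon>::real.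
         n \<ge> 1 \<and> (\<forall>i\<in>{1..n}. norm (x i) = 1) \<and> norm xs \<le> 1 \<and> \<epsilon> > 0 \<longrightarrow>
         (\<exists>y::'a. norm y = 1 \<and>
            (\<forall>i\<in>{1..n}. \<forall>t::real. t \<ge> \<epsilon> \<longrightarrow>
               norm (x i + t *\<^sub>R y) \<ge> (1 - \<epsilon>) * (\<bar>blinfun_apply xs (x i)\<bar> + t)))))"
  (is "(?W \<longleftrightarrow> ?sphere) \<and> (?W \<longleftrightarrow> ?open_ray) \<and> (?W \<longleftrightarrow> ?closed_ray)")
proof -
  have sphere_open_ray: "?open_ray" if sphere: ?sphere
  proof (intro allI impI, elim conjE)
    fix n :: nat and x :: "nat \<Rightarrow> 'a" and f :: "'a \<Rightarrow>\<^sub>L real" and \<epsilon> :: real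
    assume unit: "\<forall>i\<in>{1..n}. norm (x i) = 1" and "norm f \<le> 1" "\<epsilon> > 0"
    have "fin_dim_subspace (span (x ` {1..n}))"
      unfolding fin_dim_subspace_def by (auto intro: subspace_span)
    from sphere[rule_format, OF conjI, OF this conjI, OF \<open>norm f \<le> 1\<close> \<open>\<epsilon> > 0\<close>]
    obtain y :: 'a where "norm y = 1" and y: "\<forall>u\<in>span (x ` {1..n}). \<forall>t. norm u = 1 \<and> t > 0 \<longrightarrow>
        norm (u + t *\<^sub>R y) \<ge> (1 - \<epsilon>) * (\<bar>blinfun_apply f u\<bar> + t)"
      by blast
    then show "\<exists>y. norm y = 1 \<and> (\<forall>i\<in>{1..n}. \<forall>t. t > 0 \<longrightarrow>
        norm (x i + t *\<^sub>R y) \<ge> (1 - \<epsilon>) * (\<bar>blinfun_apply f (x i)\<bar> + t))"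
      using unit by (intro exI[of _ y]) (auto intro: span_base)
  qed
  have open_closed_ray: "?closed_ray" if open_ray: ?open_ray
  proof (intro allI impI, elim conjE)
    fix n :: nat and x :: "nat \<Rightarrow> 'a" and f :: "'a \<Rightarrow>\<^sub>L real" and \<epsilon> :: real
    assume "n \<ge> 1" "\<forall>i\<in>{1..n}. norm (x i) = 1" "norm f \<le> 1" "\<epsilon> > 0"
    then have "n \<ge> 1 \<and> (\<forall>i\<in>{1..n}. norm (x i) = 1) \<and> norm f \<le> 1 \<and> \<epsilon> > 0"
      by blast
    from open_ray[rule_format, OF this]
    obtain y :: 'a where "norm y = 1" and y: "\<forall>i\<in>{1..n}. \<forall>t. t > 0 \<longrightarrow>
        norm (x i + t *\<^sub>R y) \<ge> (1 - \<epsilon>) * (\<bar>blinfun_apply f (x i)\<bar> + t)"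
      by blast
    then show "\<exists>y. norm y = 1 \<and> (\<forall>i\<in>{1..n}. \<forall>t. t \<ge> \<epsilon> \<longrightarrow>
        norm (x i + t *\<^sub>R y) \<ge> (1 - \<epsilon>) * (\<bar>blinfun_apply f (x i)\<bar> + t))"
      using \<open>\<epsilon> > 0\<close> by (intro exI[of _ y]) auto
  qed
  have closed_ray_W: "?W" if closed_ray: ?closed_ray
  proof (rule weakly_octahedralI_sphere)
    fix E :: "'a set" and f :: "'a \<Rightarrow>\<^sub>L real" and \<epsilon> :: real
    assume "fin_dim_subspace E" "norm f \<le> 1" "0 < \<epsilon>" "\<epsilon> \<le> 1"
    from almost_l1_sum_sphere_if_finite_sets[OF almost_l1_sum_finite_sets_if_indexed[OF nontriv closed_ray] this]
    show "\<exists>y. norm y = 1 \<and>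
        (\<forall>u\<in>E. \<forall>t. norm u = 1 \<and> 0 < t \<longrightarrow> almost_l1_sum f \<epsilon> u (t *\<^sub>R y))" .
  qed
  have equivalence_cycle: "(P \<longleftrightarrow> Q) \<and> (P \<longleftrightarrow> R) \<and> (P \<longleftrightarrow> S)"
    if "P \<longleftrightarrow> Q" "Q \<Longrightarrow> R" "R \<Longrightarrow> S" "S \<Longrightarrow> P" for P Q R S
    using that by blast
  show ?thesis
    by (rule equivalence_cycle[OF weakly_octahedral_iff_sphere sphere_open_ray open_closed_ray closed_ray_W])
qed

end
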